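(* Every almost bipartite cubic graph $G$ with surplus edges $e$ and $f$ has a perfect matching that contains both $e$ and $f$.
   Context: A cubic graph $G$ (multiple edges and loops permitted) is almost bipartite if it is bridgeless, not bipartite, and contains two edges $e$ and $f$ such that $G-\{e,f\}$ is bipartite; such edges $e,f$ are called surplus edges of $G$. *)

theory Defs
  imports Main
begin

text \<open>A finite multigraph (loops and parallel edges allowed) is given by a vertex set V,
an edge set E, and endpoint maps s and t (each edge e joins s e and t e; e is a loop iff
s e = t e).\<close>

definition multigraph :: "'v set \<Rightarrow> 'e set \<Rightarrow> ('e \<Rightarrow> 'v) \<Rightarrow> ('e \<Rightarrow> 'v) \<Rightarrow> bool" where
  "multigraph V E s t \<longleftrightarrow> finite V \<and> finite E \<and> (\<forall>e\<in>E. s e \<in> V \<and> t e \<in> V)"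

text \<open>Degree; a loop contributes 2.\<close>
definition degree :: "'e set \<Rightarrow> ('e \<Rightarrow> 'v) \<Rightarrow> ('e \<Rightarrow> 'v) \<Rightarrow> 'v \<Rightarrow> nat" where
  "degree E s t v = card {e\<in>E. s e = v} + card {e\<in>E. t e = v}"

definition cubic :: "'v set \<Rightarrow> 'e set \<Rightarrow> ('e \<Rightarrow> 'v) \<Rightarrow> ('e \<Rightarrow> 'v) \<Rightarrow> bool" where
  "cubic V E s t \<longleftrightarrow> multigraph V E s t \<and> (\<forall>v\<in>V. degree E s t v = 3)"

definition adj :: "'e set \<Rightarrow> ('e \<Rightarrow> 'v) \<Rightarrow> ('e \<Rightarrow> 'v) \<Rightarrow> 'v \<Rightarrow> 'v \<Rightarrow> bool" where
  "adj F s t u v \<longleftrightarrow> (\<exists>e\<in>F. (s e = u \<and> t e = v) \<or> (s e = v \<and> t e = u))"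

definition reachable :: "'e set \<Rightarrow> ('e \<Rightarrow> 'v) \<Rightarrow> ('e \<Rightarrow> 'v) \<Rightarrow> 'v \<Rightarrow> 'v \<Rightarrow> bool" where
  "reachable F s t = (adj F s t)\<^sup>*\<^sup>*"

definition is_bridge :: "'e set \<Rightarrow> ('e \<Rightarrow> 'v) \<Rightarrow> ('e \<Rightarrow> 'v) \<Rightarrow> 'e \<Rightarrow> bool" where
  "is_bridge E s t e \<longleftrightarrow> e \<in> E \<and> \<not> reachable (E - {e}) s t (s e) (t e)"

definition bridgeless :: "'e set \<Rightarrow> ('e \<Rightarrow> 'v) \<Rightarrow> ('e \<Rightarrow> 'v) \<Rightarrow> bool" where
  "bridgeless E s t \<longleftrightarrow> (\<forall>e\<in>E. \<not> is_bridge E s t e)"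

text \<open>The spanning subgraph (V, F) is bipartite: a 2-colouring of V with every edge of F
joining the two colour classes (so loops are excluded).\<close>
definition bipartite :: "'v set \<Rightarrow> 'e set \<Rightarrow> ('e \<Rightarrow> 'v) \<Rightarrow> ('e \<Rightarrow> 'v) \<Rightarrow> bool" where
  "bipartite V F s t \<longleftrightarrow> (\<exists>A\<subseteq>V. \<forall>e\<in>F. (s e \<in> A \<longleftrightarrow> t e \<notin> A))"

definition almost_bipartite_with :: "'v set \<Rightarrow> 'e set \<Rightarrow> ('e \<Rightarrow> 'v) \<Rightarrow> ('e \<Rightarrow> 'v) \<Rightarrow> 'e \<Rightarrow> 'e \<Rightarrow> bool" where
  "almost_bipartite_with V E s t e f \<longleftrightarrow>
     cubic V E s t \<and> bridgeless E s t \<and> \<not> bipartite V E s t \<and>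
     e \<in> E \<and> f \<in> E \<and> e \<noteq> f \<and> bipartite V (E - {e, f}) s t"

definition perfect_matching :: "'v set \<Rightarrow> 'e set \<Rightarrow> ('e \<Rightarrow> 'v) \<Rightarrow> ('e \<Rightarrow> 'v) \<Rightarrow> 'e set \<Rightarrow> bool" where
  "perfect_matching V E s t M \<longleftrightarrow> M \<subseteq> E \<and> (\<forall>e\<in>M. s e \<noteq> t e) \<and>
     (\<forall>v\<in>V. card {e\<in>M. s e = v \<or> t e = v} = 1)"

end

theory Submission
  imports Defs
begin

text \<open>For a vertex set X of a cubic graph, counting edge ends gives
3|X| = |cut X| + 2|inner X|. Let (X, V - X) be a bipartition of G - {e, f}. Comparing the
counts for X and V - X, which share their cut, shows that their numbers of inner edges agree
mod 3; they cannot both be zero since G is not bipartite, so one side A contains both ends of e,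
the other both ends of f, and |A| = |V - A|. After removing the ends of e and f, Hall's condition
holds between the remaining vertices A0 of A and B0 of V - A: for a set S in A0 with fewer
neighbours, the same count applied to S, its neighbours and the ends of f leaves exactly one edge
in the cut, i.e. a bridge. The resulting matching between A0 and B0, together with e and f, is
the required perfect matching.\<close>

section \<open>Hall's marriage theorem\<close>

lemma Hall_condition_remove_element:
  assumes surplus: "\<forall>J\<subseteq>I. J \<noteq> {} \<and> J \<noteq> I \<longrightarrow> card J < card (\<Union>(A ` J))" and "i \<in> I"
  shows "\<forall>J\<subseteq>I - {i}. card J \<le> card (\<Union>j\<in>J. A j - {x})"
proof (intro allI impI)
  fix J assume J: "J \<subseteq> I - {i}"
  show "card J \<le> card (\<Union>j\<in>J. A j - {x})"
  proof (cases "J = {}")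
    case False
    with J \<open>i \<in> I\<close> surplus have "card J < card (\<Union>(A ` J))"
      by blast
    moreover have "card (\<Union>(A ` J)) - 1 \<le> card (\<Union>(A ` J) - {x})"
      using diff_card_le_card_Diff[of "{x}"] by simp
    moreover have "(\<Union>j\<in>J. A j - {x}) = \<Union>(A ` J) - {x}"
      by blast
    ultimately show ?thesis
      by simp
  qed simp
qed

lemma Hall_condition_remove_critical:
  assumes hall: "\<forall>K\<subseteq>I. card K \<le> card (\<Union>(A ` K))"
    and "finite I" "\<forall>i\<in>I. finite (A i)"
    and "J \<subseteq> I" and critical: "card J = card (\<Union>(A ` J))"
  shows "\<forall>K\<subseteq>I - J. card K \<le> card (\<Union>k\<in>K. A k - \<Union>(A ` J))"
proof (intro allI impI)
  fix K assume K: "K \<subseteq> I - J"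
  let ?U = "\<Union>(A ` J)"
  have "K \<union> J \<subseteq> I"
    using K \<open>J \<subseteq> I\<close> by blast
  then have fin: "finite K" "finite J" "finite (\<Union>(A ` (K \<union> J)))"
    using assms(2,3) by (auto dest: finite_subset)
  have "card K + card J = card (K \<union> J)"
    using K fin(1,2) by (subst card_Un_disjoint) auto
  also have "\<dots> \<le> card (\<Union>(A ` (K \<union> J)))"
    using \<open>K \<union> J \<subseteq> I\<close> hall by blast
  also have "\<dots> = card (\<Union>(A ` (K \<union> J)) - ?U) + card ?U"
    using fin(3) card_mono[OF fin(3), of ?U] by (simp add: card_Diff_subset finite_subset UN_mono)
  also have "\<Union>(A ` (K \<union> J)) - ?U = (\<Union>k\<in>K. A k - ?U)"
    by blast
  finally show "card K \<le> card (\<Union>k\<in>K. A k - ?U)"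
    using critical by simp
qed

text \<open>Halmos-Vaughan induction: if every proper nonempty subfamily has a surplus, any
representative may be fixed for one index; otherwise a critical subfamily J is matched on its
own, and I - J within the complement of the union over J.\<close>

theorem Hall_marriage:
  assumes "finite I" "\<forall>i\<in>I. finite (A i)" "\<forall>J\<subseteq>I. card J \<le> card (\<Union>(A ` J))"
  shows "\<exists>R. inj_on R I \<and> (\<forall>i\<in>I. R i \<in> A i)"
  using assms
proof (induction "card I" arbitrary: I A rule: less_induct)
  case less
  note fin = less.prems(1,2) and hall = less.prems(3)
  consider "I = {}"
    | "I \<noteq> {}" "\<forall>J\<subseteq>I. J \<noteq> {} \<and> J \<noteq> I \<longrightarrow> card J < card (\<Union>(A ` J))"
    | J where "J \<subseteq> I" "J \<noteq> {}" "J \<noteq> I" "card J = card (\<Union>(A ` J))"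
    using hall le_neq_implies_less by blast
  then show ?case
  proof cases
    case 1
    then show ?thesis by simp
  next
    case 2
    then obtain i where "i \<in> I" by blast
    then have "card {i} \<le> card (A i)"
      using hall[rule_format, of "{i}"] by simp
    then obtain x where "x \<in> A i"
      by fastforce
    have "card (I - {i}) < card I"
      using fin(1) \<open>i \<in> I\<close> by (rule card_Diff1_less)
    then obtain R where R: "inj_on R (I - {i})" "\<forall>j\<in>I - {i}. R j \<in> A j - {x}"
      using less.hyps[of "I - {i}" "\<lambda>j. A j - {x}"] fin
        Hall_condition_remove_element[OF 2(2) \<open>i \<in> I\<close>] by auto
    have "inj_on (R(i := x)) (insert i (I - {i}))"
      unfolding inj_on_insert using R by (auto simp: inj_on_def)
    then have "inj_on (R(i := x)) I"
      using \<open>i \<in> I\<close> by (simp add: insert_absorb)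
    moreover have "\<forall>j\<in>I. (R(i := x)) j \<in> A j"
      using R \<open>x \<in> A i\<close> by auto
    ultimately show ?thesis by blast
  next
    case 3
    let ?U = "\<Union>(A ` J)"
    have "J \<subset> I" "I - J \<subset> I"
      using 3(1-3) by auto
    then have "card J < card I" "card (I - J) < card I"
      using fin by (simp_all add: psubset_card_mono)
    have "\<forall>j\<in>J. finite (A j)" "\<forall>K\<subseteq>J. card K \<le> card (\<Union>(A ` K))"
      using 3(1) fin(2) hall by blast+
    from less.hyps[OF \<open>card J < card I\<close> finite_subset[OF 3(1) fin(1)] this]
    obtain R1 where R1: "inj_on R1 J" "\<forall>j\<in>J. R1 j \<in> A j"
      by blast
    have "\<forall>k\<in>I - J. finite (A k - ?U)"
      using fin(2) by blast
    from less.hyps[OF \<open>card (I - J) < card I\<close> finite_Diff[OF fin(1)] this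
        Hall_condition_remove_critical[OF hall fin 3(1,4)]]
    obtain R2 where R2: "inj_on R2 (I - J)" "\<forall>j\<in>I - J. R2 j \<in> A j - ?U"
      by blast
    let ?R = "\<lambda>j. if j \<in> J then R1 j else R2 j"
    have "inj_on ?R J" "inj_on ?R (I - J)"
      using R1(1) R2(1) by (simp_all add: inj_on_def)
    moreover have "?R ` J \<inter> ?R ` (I - J) = {}"
      using R1(2) R2(2) by fastforce
    ultimately have "inj_on ?R (J \<union> (I - J))"
      by (subst inj_on_Un) blast
    then have "inj_on ?R I"
      using 3(1) by (simp add: Un_absorb1)
    moreover have "\<forall>j\<in>I. ?R j \<in> A j"
      using R1 R2 by auto
    ultimately show ?thesis by blast
  qed
qed

section \<open>Edge cuts in cubic graphs\<close>

definition cut_edges :: "'e set \<Rightarrow> ('e \<Rightarrow> 'v) \<Rightarrow> ('e \<Rightarrow> 'v) \<Rightarrow> 'v set \<Rightarrow> 'e set" where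
  "cut_edges E s t X = {g\<in>E. (s g \<in> X) \<noteq> (t g \<in> X)}"

definition inner_edges :: "'e set \<Rightarrow> ('e \<Rightarrow> 'v) \<Rightarrow> ('e \<Rightarrow> 'v) \<Rightarrow> 'v set \<Rightarrow> 'e set" where
  "inner_edges E s t X = {g\<in>E. s g \<in> X \<and> t g \<in> X}"

lemma card_endpoint_in_eq_sum:
  assumes "finite E" "finite X"
  shows "card {g\<in>E. h g \<in> X} = (\<Sum>v\<in>X. card {g\<in>E. h g = v})"
proof -
  have "{g\<in>E. h g \<in> X} = (\<Union>v\<in>X. {g\<in>E. h g = v})" by auto
  also have "card \<dots> = (\<Sum>v\<in>X. card {g\<in>E. h g = v})"
    using assms by (intro card_UN_disjoint) auto
  finally show ?thesis .
qed

lemma sum_degree: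
  assumes "finite E" "finite X"
  shows "(\<Sum>v\<in>X. degree E s t v) = card {g\<in>E. s g \<in> X} + card {g\<in>E. t g \<in> X}"
  using assms by (simp add: degree_def sum.distrib card_endpoint_in_eq_sum)

lemma card_ends_eq_cut_inner:
  assumes "finite E"
  shows "card {g\<in>E. s g \<in> X} + card {g\<in>E. t g \<in> X}
           = card (cut_edges E s t X) + 2 * card (inner_edges E s t X)"
proof -
  let ?I = "inner_edges E s t X"
  let ?S = "{g\<in>E. s g \<in> X \<and> t g \<notin> X}" and ?T = "{g\<in>E. t g \<in> X \<and> s g \<notin> X}"
  have "{g\<in>E. s g \<in> X} = ?I \<union> ?S" "{g\<in>E. t g \<in> X} = ?I \<union> ?T" "cut_edges E s t X = ?S \<union> ?T"
    by (auto simp: inner_edges_def cut_edges_def)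
  moreover have "?I \<inter> ?S = {}" "?I \<inter> ?T = {}" "?S \<inter> ?T = {}"
    by (auto simp: inner_edges_def)
  ultimately show ?thesis
    using assms by (simp add: card_Un_disjoint inner_edges_def)
qed

lemma cubic_card_eq_cut_inner:
  assumes "cubic V E s t" "X \<subseteq> V"
  shows "3 * card X = card (cut_edges E s t X) + 2 * card (inner_edges E s t X)"
proof -
  have fin: "finite E" "finite X"
    using assms finite_subset unfolding cubic_def multigraph_def by auto
  have "3 * card X = (\<Sum>v\<in>X. degree E s t v)"
    using assms unfolding cubic_def by (simp add: subset_iff)
  then show ?thesis
    using fin by (simp add: sum_degree card_ends_eq_cut_inner)
qed

lemma cut_complement:
  assumes "multigraph V E s t"
  shows "cut_edges E s t (V - X) = cut_edges E s t X"
  using assms unfolding cut_edges_def multigraph_def by blast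

lemma reachable_cut_edges_empty:
  assumes "reachable F s t u w" "cut_edges F s t X = {}"
  shows "u \<in> X \<longleftrightarrow> w \<in> X"
  using assms(1) unfolding reachable_def
proof (induction rule: rtranclp_induct)
  case (step y z)
  then show ?case using assms(2) unfolding adj_def cut_edges_def by blast
qed simp

lemma not_bridgeless_if_card_cut_edges_1:
  assumes "card (cut_edges E s t X) = 1"
  shows "\<not> bridgeless E s t"
proof -
  obtain h where h: "cut_edges E s t X = {h}"
    using assms card_1_singletonE by blast
  then have "h \<in> cut_edges E s t X"
    by simp
  then have "h \<in> E" "(s h \<in> X) \<noteq> (t h \<in> X)"
    unfolding cut_edges_def by simp_all
  have "cut_edges (E - {h}) s t X = cut_edges E s t X - {h}"
    unfolding cut_edges_def by blast
  with h have "cut_edges (E - {h}) s t X = {}"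
    by simp
  then have "\<not> reachable (E - {h}) s t (s h) (t h)"
    using \<open>(s h \<in> X) \<noteq> (t h \<in> X)\<close> reachable_cut_edges_empty by metis
  with \<open>h \<in> E\<close> show ?thesis
    unfolding bridgeless_def is_bridge_def by blast
qed

lemma cubic_bridgeless_no_loop:
  assumes "cubic V E s t" "bridgeless E s t" "g \<in> E"
  shows "s g \<noteq> t g"
proof
  assume loop: "s g = t g"
  have "s g \<in> V" "finite E"
    using assms unfolding cubic_def multigraph_def by auto
  then have "3 = card (cut_edges E s t {s g}) + 2 * card (inner_edges E s t {s g})"
    using cubic_card_eq_cut_inner[OF assms(1), of "{s g}"] by simp
  moreover have "card (inner_edges E s t {s g}) \<ge> 1"
    using loop assms(3) \<open>finite E\<close> by (auto simp: inner_edges_def Suc_le_eq card_gt_0_iff)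
  moreover have "c = 1" if "3 = c + 2 * i" "i \<ge> 1" for c i :: nat
    using that by presburger
  ultimately have "card (cut_edges E s t {s g}) = 1"
    by blast
  with assms(2) show False
    using not_bridgeless_if_card_cut_edges_1 by blast
qed

lemma cubic_card_eq_cut_Un:
  assumes "cubic V E s t" "S \<subseteq> V" "T \<subseteq> V" "S \<inter> T = {}"
    and "\<forall>g\<in>E. (s g \<in> S \<longrightarrow> t g \<in> T) \<and> (t g \<in> S \<longrightarrow> s g \<in> T)"
  shows "3 * card T = 3 * card S + card (cut_edges E s t (S \<union> T)) + 2 * card (inner_edges E s t T)"
proof -
  have fin: "finite E" using assms(1) unfolding cubic_def multigraph_def by auto
  have "inner_edges E s t S = {}"
    using assms(4,5) by (auto simp: inner_edges_def)
  then have S: "3 * card S = card (cut_edges E s t S)"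
    using cubic_card_eq_cut_inner[OF assms(1,2)] by simp
  have "cut_edges E s t T = cut_edges E s t S \<union> cut_edges E s t (S \<union> T)"
    using assms(4,5) by (auto simp: cut_edges_def)
  moreover have "cut_edges E s t S \<inter> cut_edges E s t (S \<union> T) = {}"
    using assms(5) by (auto simp: cut_edges_def)
  ultimately have "card (cut_edges E s t T) = card (cut_edges E s t S) + card (cut_edges E s t (S \<union> T))"
    using fin by (simp add: card_Un_disjoint cut_edges_def)
  then show ?thesis
    using S cubic_card_eq_cut_inner[OF assms(1,3)] by simp
qed

lemma perfect_matching_edge:
  assumes "g \<in> E" "s g \<noteq> t g"
  shows "perfect_matching {s g, t g} E s t {g}"
proof -
  have "{h\<in>{g}. s h = v \<or> t h = v} = {g}" if "v \<in> {s g, t g}" for v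
    using that by auto
  then show ?thesis
    using assms unfolding perfect_matching_def by simp
qed

lemma perfect_matching_Un:
  assumes "perfect_matching V\<^sub>1 E s t M\<^sub>1" "\<forall>g\<in>M\<^sub>1. s g \<in> V\<^sub>1 \<and> t g \<in> V\<^sub>1"
    and "perfect_matching V\<^sub>2 E s t M\<^sub>2" "\<forall>g\<in>M\<^sub>2. s g \<in> V\<^sub>2 \<and> t g \<in> V\<^sub>2"
    and "V\<^sub>1 \<inter> V\<^sub>2 = {}"
  shows "perfect_matching (V\<^sub>1 \<union> V\<^sub>2) E s t (M\<^sub>1 \<union> M\<^sub>2)"
proof -
  have "{g\<in>M\<^sub>1 \<union> M\<^sub>2. s g = v \<or> t g = v} = {g\<in>M\<^sub>1. s g = v \<or> t g = v}" if "v \<in> V\<^sub>1" for v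
    using that assms(4,5) by blast
  moreover have "{g\<in>M\<^sub>1 \<union> M\<^sub>2. s g = v \<or> t g = v} = {g\<in>M\<^sub>2. s g = v \<or> t g = v}" if "v \<in> V\<^sub>2" for v
    using that assms(2,5) by blast
  ultimately show ?thesis
    using assms(1,3) unfolding perfect_matching_def by auto
qed

lemma perfect_matching_of_bij:
  assumes "bij_betw R A B" "A \<inter> B = {}" "\<forall>a\<in>A. adj E s t a (R a)"
  obtains M where "perfect_matching (A \<union> B) E s t M" "\<forall>g\<in>M. s g \<in> A \<union> B \<and> t g \<in> A \<union> B"
proof -
  obtain G where G: "\<forall>a\<in>A. G a \<in> E \<and> (s (G a) = a \<and> t (G a) = R a \<or> s (G a) = R a \<and> t (G a) = a)"
    using bchoice[OF assms(3)[unfolded adj_def Bex_def]] by blast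
  have R: "\<forall>a\<in>A. R a \<in> B \<and> R a \<noteq> a"
    using bij_betwE[OF assms(1)] assms(2) by fastforce
  have touching: "{g\<in>G ` A. s g = v \<or> t g = v} = G ` {a\<in>A. v = a \<or> v = R a}" for v
    using G by auto
  have unique: "\<exists>a\<^sub>0. {a\<in>A. v = a \<or> v = R a} = {a\<^sub>0}" if "v \<in> A \<union> B" for v
  proof (cases "v \<in> A")
    case True
    then have "{a\<in>A. v = a \<or> v = R a} = {v}"
      using R assms(2) by blast
    then show ?thesis ..
  next
    case False
    with that assms(1) obtain a\<^sub>0 where "a\<^sub>0 \<in> A" "v = R a\<^sub>0"
      by (auto simp: bij_betw_def)
    with False assms(1) have "{a\<in>A. v = a \<or> v = R a} = {a\<^sub>0}"
      by (auto simp: bij_betw_def inj_on_def)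
    then show ?thesis ..
  qed
  have "perfect_matching (A \<union> B) E s t (G ` A)"
    unfolding perfect_matching_def
  proof (intro conjI ballI)
    show "G ` A \<subseteq> E"
      using G by blast
    show "s g \<noteq> t g" if "g \<in> G ` A" for g
      using that G R by force
    show "card {g\<in>G ` A. s g = v \<or> t g = v} = 1" if "v \<in> A \<union> B" for v
      using unique[OF that] unfolding touching by auto
  qed
  moreover have "\<forall>g\<in>G ` A. s g \<in> A \<union> B \<and> t g \<in> A \<union> B"
    using G R by auto
  ultimately show ?thesis
    using that by blast
qed

section \<open>Almost bipartite cubic graphs\<close>

lemma cubic_inner_edges_complement_balance:
  assumes "cubic V E s t" "X \<subseteq> V"
  shows "3 * card X + 2 * card (inner_edges E s t (V - X))
    = 3 * card (V - X) + 2 * card (inner_edges E s t X)"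
proof -
  have "cut_edges E s t (V - X) = cut_edges E s t X"
    using assms(1) cut_complement unfolding cubic_def by blast
  then show ?thesis
    using cubic_card_eq_cut_inner[OF assms] cubic_card_eq_cut_inner[OF assms(1) Diff_subset]
    by simp
qed

locale surplus_bipartition =
  fixes V :: "'v set" and E :: "'e set" and s t :: "'e \<Rightarrow> 'v" and e f :: 'e and A :: "'v set"
  assumes cubic: "cubic V E s t"
    and bridgeless: "bridgeless E s t"
    and surplus_in_E: "e \<in> E" "f \<in> E"
    and side: "A \<subseteq> V"
    and crossing: "\<forall>g\<in>E - {e, f}. (s g \<in> A) \<noteq> (t g \<in> A)"
    and e_inside: "s e \<in> A" "t e \<in> A"
    and f_outside: "s f \<notin> A" "t f \<notin> A"
begin

abbreviation A\<^sub>0 :: "'v set" where "A\<^sub>0 \<equiv> A - {s e, t e}"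
abbreviation B\<^sub>0 :: "'v set" where "B\<^sub>0 \<equiv> V - A - {s f, t f}"

lemma ends_in_V: "g \<in> E \<Longrightarrow> s g \<in> V \<and> t g \<in> V"
  using cubic unfolding cubic_def multigraph_def by blast

lemma finite_V: "finite V"
  using cubic unfolding cubic_def multigraph_def by blast

lemma surplus_not_loops: "s e \<noteq> t e" "s f \<noteq> t f"
  using cubic_bridgeless_no_loop[OF cubic bridgeless] surplus_in_E by blast+

lemma inner_edges_sides: "inner_edges E s t A = {e}" "inner_edges E s t (V - A) = {f}"
  using crossing e_inside f_outside surplus_in_E ends_in_V
  unfolding inner_edges_def by auto

lemma card_A\<^sub>0_eq_card_B\<^sub>0: "card A\<^sub>0 = card B\<^sub>0"
proof -
  have "card A = card (V - A)"
    using cubic_inner_edges_complement_balance[OF cubic side] inner_edges_sides by simp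
  moreover have "{s e, t e} \<subseteq> A" "{s f, t f} \<subseteq> V - A"
    using e_inside f_outside ends_in_V surplus_in_E by auto
  ultimately show ?thesis
    using finite_V side surplus_not_loops by (simp add: card_Diff_subset finite_subset)
qed

abbreviation nbrs :: "'v \<Rightarrow> 'v set" where "nbrs v \<equiv> {w\<in>B\<^sub>0. adj E s t v w}"

lemma edge_from_A\<^sub>0:
  assumes "g \<in> E" "v \<in> A\<^sub>0" "s g = v \<and> t g = w \<or> s g = w \<and> t g = v"
  shows "w \<in> nbrs v \<union> {s f, t f}"
proof -
  have "g \<noteq> e" "g \<noteq> f"
    using assms(2,3) f_outside by auto
  with assms crossing have "w \<notin> A"
    by auto
  moreover have "adj E s t v w"
    using assms(1,3) unfolding adj_def by blast
  ultimately show ?thesis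
    using ends_in_V[OF assms(1)] assms(3) by auto
qed

text \<open>A set S violating Hall's condition, together with its neighbours and the ends of f,
would be a vertex set with a single edge in its cut.\<close>

lemma Hall_condition_nbrs:
  assumes "S \<subseteq> A\<^sub>0"
  shows "card S \<le> card (\<Union>(nbrs ` S))"
proof (rule ccontr)
  let ?N = "\<Union>(nbrs ` S)"
  let ?T = "?N \<union> {s f, t f}"
  assume deficient: "\<not> card S \<le> card ?N"
  have "?N \<subseteq> B\<^sub>0"
    by blast
  then have card_T: "card ?T = card ?N + 2"
    using finite_V surplus_not_loops by (simp add: card_Un_disjoint finite_subset)
  have "S \<subseteq> V" "S \<inter> ?T = {}" and T_outside: "?T \<subseteq> V - A"
    using assms side f_outside ends_in_V surplus_in_E by auto
  have edges_at_S: "\<forall>g\<in>E. (s g \<in> S \<longrightarrow> t g \<in> ?T) \<and> (t g \<in> S \<longrightarrow> s g \<in> ?T)"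
  proof (intro ballI conjI impI)
    fix g assume "g \<in> E"
    show "t g \<in> ?T" if "s g \<in> S"
      using edge_from_A\<^sub>0[OF \<open>g \<in> E\<close>, of "s g" "t g"] that assms by blast
    show "s g \<in> ?T" if "t g \<in> S"
      using edge_from_A\<^sub>0[OF \<open>g \<in> E\<close>, of "t g" "s g"] that assms by blast
  qed
  have "inner_edges E s t ?T \<subseteq> inner_edges E s t (V - A)"
    using T_outside unfolding inner_edges_def by blast
  then have inner_T: "inner_edges E s t ?T = {f}"
    using inner_edges_sides(2) surplus_in_E unfolding inner_edges_def by blast
  have "3 * card ?T = 3 * card S + card (cut_edges E s t (S \<union> ?T)) + 2"
    using cubic_card_eq_cut_Un[OF cubic \<open>S \<subseteq> V\<close> _ \<open>S \<inter> ?T = {}\<close> edges_at_S] T_outside inner_T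
    by auto
  moreover have "c = 1" if "3 * (n + 2) = 3 * m + c + 2" "n < m" for c m n :: nat
    using that by presburger
  ultimately have "card (cut_edges E s t (S \<union> ?T)) = 1"
    using card_T deficient by simp
  with bridgeless show False
    using not_bridgeless_if_card_cut_edges_1 by blast
qed

lemma perfect_matching_containing_surplus: "\<exists>M. perfect_matching V E s t M \<and> e \<in> M \<and> f \<in> M"
proof -
  have "finite A\<^sub>0" "\<forall>v\<in>A\<^sub>0. finite (nbrs v)" "\<forall>S\<subseteq>A\<^sub>0. card S \<le> card (\<Union>(nbrs ` S))"
    using finite_V side Hall_condition_nbrs by (auto intro: finite_subset)
  from Hall_marriage[OF this] obtain R where R: "inj_on R A\<^sub>0" "\<forall>v\<in>A\<^sub>0. R v \<in> nbrs v"
    by blast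
  then have "R ` A\<^sub>0 = B\<^sub>0"
    using finite_V card_A\<^sub>0_eq_card_B\<^sub>0 by (intro card_subset_eq) (auto simp: card_image)
  then have "bij_betw R A\<^sub>0 B\<^sub>0"
    using R(1) by (simp add: bij_betw_def)
  moreover have "A\<^sub>0 \<inter> B\<^sub>0 = {}"
    by blast
  moreover have "\<forall>v\<in>A\<^sub>0. adj E s t v (R v)"
    using R(2) by blast
  ultimately obtain M where M: "perfect_matching (A\<^sub>0 \<union> B\<^sub>0) E s t M"
    "\<forall>g\<in>M. s g \<in> A\<^sub>0 \<union> B\<^sub>0 \<and> t g \<in> A\<^sub>0 \<union> B\<^sub>0"
    by (rule perfect_matching_of_bij)
  have "perfect_matching ({s e, t e} \<union> {s f, t f}) E s t ({e} \<union> {f})"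
    using e_inside f_outside surplus_in_E surplus_not_loops
    by (intro perfect_matching_Un perfect_matching_edge) auto
  then have "perfect_matching ({s e, t e} \<union> {s f, t f} \<union> (A\<^sub>0 \<union> B\<^sub>0)) E s t ({e} \<union> {f} \<union> M)"
    by (rule perfect_matching_Un[OF _ _ M]) (auto simp: e_inside f_outside)
  moreover have "{s e, t e} \<union> {s f, t f} \<union> (A\<^sub>0 \<union> B\<^sub>0) = V"
    using side e_inside f_outside ends_in_V surplus_in_E by auto
  ultimately show ?thesis
    by auto
qed

end

lemma almost_bipartite_inner_edges:
  assumes "almost_bipartite_with V E s t e f"
    and "X \<subseteq> V" "\<forall>g\<in>E - {e, f}. (s g \<in> X) \<noteq> (t g \<in> X)"
  shows "inner_edges E s t X = {e} \<and> inner_edges E s t (V - X) = {f}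
    \<or> inner_edges E s t X = {f} \<and> inner_edges E s t (V - X) = {e}"
proof -
  let ?I = "inner_edges E s t X" and ?J = "inner_edges E s t (V - X)"
  have cubic: "cubic V E s t" and "e \<noteq> f" and not_bipartite: "\<not> bipartite V E s t"
    using assms(1) unfolding almost_bipartite_with_def by auto
  have sub: "?I \<subseteq> {e, f}" "?J \<subseteq> {e, f}" and disj: "?I \<inter> ?J = {}"
    using assms(3) unfolding inner_edges_def by auto
  then have fin: "finite ?I" "finite ?J"
    using finite_subset by blast+
  have "card ?I + card ?J \<le> card {e, f}"
    using sub disj fin by (simp add: card_Un_disjoint[symmetric] card_mono)
  then have "card ?I \<in> {0, 1, 2}" "card ?J \<in> {0, 1, 2}"
    using \<open>e \<noteq> f\<close> by auto
  moreover have "(2 * card ?J) mod 3 = (2 * card ?I) mod 3"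
    using arg_cong[OF cubic_inner_edges_complement_balance[OF cubic assms(2)], of "\<lambda>n. n mod 3"]
    by simp
  ultimately have "card ?I = card ?J"
    by auto
  moreover have "card ?I \<noteq> 0 \<or> card ?J \<noteq> 0"
  proof (rule ccontr)
    assume "\<not> ?thesis"
    then have "?I = {}" "?J = {}"
      using fin by simp_all
    have "(s g \<in> X) \<noteq> (t g \<in> X)" if "g \<in> E" for g
    proof -
      have "g \<notin> ?I" "g \<notin> ?J"
        using \<open>?I = {}\<close> \<open>?J = {}\<close> by simp_all
      with that cubic show ?thesis
        unfolding inner_edges_def cubic_def multigraph_def by auto
    qed
    with assms(2) not_bipartite show False
      unfolding bipartite_def by blast
  qed
  ultimately have "card ?I = 1" "card ?J = 1"
    using \<open>card ?I + card ?J \<le> card {e, f}\<close> \<open>e \<noteq> f\<close> by auto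
  then show ?thesis
    using sub disj by (auto simp: card_1_singleton_iff)
qed

lemma almost_bipartite_surplus_bipartition:
  assumes "almost_bipartite_with V E s t e f"
  obtains A where "surplus_bipartition V E s t e f A"
proof -
  have basics: "cubic V E s t" "bridgeless E s t" "e \<in> E" "f \<in> E"
    using assms unfolding almost_bipartite_with_def by auto
  then have ends: "\<forall>g\<in>E. s g \<in> V \<and> t g \<in> V"
    unfolding cubic_def multigraph_def by blast
  obtain X where X: "X \<subseteq> V" "\<forall>g\<in>E - {e, f}. (s g \<in> X) \<noteq> (t g \<in> X)"
    using assms unfolding almost_bipartite_with_def bipartite_def by blast
  from almost_bipartite_inner_edges[OF assms X] show ?thesis
  proof (elim disjE conjE)
    assume "inner_edges E s t X = {e}" "inner_edges E s t (V - X) = {f}"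
    then have "e \<in> inner_edges E s t X" "f \<in> inner_edges E s t (V - X)"
      by simp_all
    with basics X show ?thesis
      by (intro that[of X]) (simp add: surplus_bipartition_def inner_edges_def)
  next
    assume "inner_edges E s t X = {f}" "inner_edges E s t (V - X) = {e}"
    then have "f \<in> inner_edges E s t X" "e \<in> inner_edges E s t (V - X)"
      by simp_all
    with basics X ends show ?thesis
      by (intro that[of "V - X"]) (auto simp: surplus_bipartition_def inner_edges_def)
  qed
qed

theorem proposition4p3:
  fixes V :: "'v set" and E :: "'e set" and s t :: "'e \<Rightarrow> 'v" and e f :: 'e
  assumes "almost_bipartite_with V E s t e f"
  shows "\<exists>M. perfect_matching V E s t M \<and> e \<in> M \<and> f \<in> M"
proof -
  obtain A where "surplus_bipartition V E s t e f A"
    using almost_bipartite_surplus_bipartition[OF assms] .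
  then show ?thesis
    by (rule surplus_bipartition.perfect_matching_containing_surplus)
qed

end
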